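(* Assume $\mathbb F$ is algebraically closed with $\operatorname{char}\mathbb F=0$. There is a five-dimensional $\Re$-module $V$ with basis $v_0,\dots,v_4$ on which $A,B,C,D$ are represented by $\tfrac14$ times the matrices $\begin{pmatrix}15&0&0&0&0\\4&3&0&0&0\\0&4&-1&0&0\\0&0&4&3&0\\0&0&0&4&15\end{pmatrix}$, $\begin{pmatrix}15&-36&0&0&0\\0&3&-6&0&0\\0&0&-1&-6&0\\0&0&0&3&-36\\0&0&0&0&15\end{pmatrix}$, $\begin{pmatrix}-9&36&0&0&0\\-4&15&6&0&0\\0&-4&23&6&0\\0&0&-4&15&36\\0&0&0&-4&-9\end{pmatrix}$, $\begin{pmatrix}18&-54&0&0&0\\6&-15&-3&0&0\\0&2&0&3&0\\0&0&-2&15&54\\0&0&0&-6&-18\end{pmatrix}$ respectively. On $V$ one has $\alpha=\beta=\gamma=0$, $V$ is irreducible, and each of $A,B,C$ has minimal polynomial $(x+\tfrac14)(x-\tfrac34)^2(x-\tfrac{15}4)^2$ on $V$; in particular none of $A,B,C$ is diagonalizable on $V$.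
   Context: The Racah algebra $\Re$ is the unital associative $\mathbb F$-algebra with generators $A,B,C,D$ and relations $[A,B]=[B,C]=[C,A]=2D$ together with the requirement that each of $\alpha:=[A,D]+AC-BA$, $\beta:=[B,D]+BA-CB$, $\gamma:=[C,D]+CB-AC$ is central in $\Re$. Matrices act on column coordinate vectors with respect to the basis $v_0,\dots,v_4$ (the $j$-th column gives the image of $v_j$). *)

theory Defs
  imports "Jordan_Normal_Form.Matrix" "HOL-Computational_Algebra.Polynomial"
begin

text \<open>Matrices act on column coordinate vectors w.r.t. the basis v0..v4.\<close>

definition matA :: "'a::field mat" where
  "matA = (1/4) \<cdot>\<^sub>m mat_of_rows_list 5
     [[15,0,0,0,0],[4,3,0,0,0],[0,4,-1,0,0],[0,0,4,3,0],[0,0,0,4,15]]"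

definition matB :: "'a::field mat" where
  "matB = (1/4) \<cdot>\<^sub>m mat_of_rows_list 5
     [[15,-36,0,0,0],[0,3,-6,0,0],[0,0,-1,-6,0],[0,0,0,3,-36],[0,0,0,0,15]]"

definition matC :: "'a::field mat" where
  "matC = (1/4) \<cdot>\<^sub>m mat_of_rows_list 5
     [[-9,36,0,0,0],[-4,15,6,0,0],[0,-4,23,6,0],[0,0,-4,15,36],[0,0,0,-4,-9]]"

definition matD :: "'a::field mat" where
  "matD = (1/4) \<cdot>\<^sub>m mat_of_rows_list 5
     [[18,-54,0,0,0],[6,-15,-3,0,0],[0,2,0,3,0],[0,0,-2,15,54],[0,0,0,-6,-18]]"

definition commut :: "'a::comm_ring_1 mat \<Rightarrow> 'a mat \<Rightarrow> 'a mat" where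
  "commut X Y = X * Y - Y * X"

definition racah_alpha :: "'a::comm_ring_1 mat \<Rightarrow> 'a mat \<Rightarrow> 'a mat \<Rightarrow> 'a mat \<Rightarrow> 'a mat" where
  "racah_alpha A B C D = commut A D + A * C - B * A"
definition racah_beta :: "'a::comm_ring_1 mat \<Rightarrow> 'a mat \<Rightarrow> 'a mat \<Rightarrow> 'a mat \<Rightarrow> 'a mat" where
  "racah_beta A B C D = commut B D + B * A - C * B"
definition racah_gamma :: "'a::comm_ring_1 mat \<Rightarrow> 'a mat \<Rightarrow> 'a mat \<Rightarrow> 'a mat \<Rightarrow> 'a mat" where
  "racah_gamma A B C D = commut C D + C * B - A * C"

definition racah_rep :: "nat \<Rightarrow> 'a::comm_ring_1 mat \<Rightarrow> 'a mat \<Rightarrow> 'a mat \<Rightarrow> 'a mat \<Rightarrow> bool" where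
  "racah_rep n A B C D \<longleftrightarrow>
     A \<in> carrier_mat n n \<and> B \<in> carrier_mat n n \<and> C \<in> carrier_mat n n \<and> D \<in> carrier_mat n n \<and>
     commut A B = 2 \<cdot>\<^sub>m D \<and> commut B C = 2 \<cdot>\<^sub>m D \<and> commut C A = 2 \<cdot>\<^sub>m D \<and>
     (\<forall>Z \<in> {racah_alpha A B C D, racah_beta A B C D, racah_gamma A B C D}.
        \<forall>X \<in> {A, B, C, D}. Z * X = X * Z)"

definition invariant_subspace :: "nat \<Rightarrow> 'a::field mat set \<Rightarrow> 'a vec set \<Rightarrow> bool" where
  "invariant_subspace n Ms W \<longleftrightarrow>
     W \<subseteq> carrier_vec n \<and> 0\<^sub>v n \<in> W \<and>
     (\<forall>v\<in>W. \<forall>w\<in>W. v + w \<in> W) \<and> (\<forall>c. \<forall>v\<in>W. c \<cdot>\<^sub>v v \<in> W) \<and>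
     (\<forall>M\<in>Ms. \<forall>v\<in>W. M *\<^sub>v v \<in> W)"

definition irreducible_rep :: "nat \<Rightarrow> 'a::field mat set \<Rightarrow> bool" where
  "irreducible_rep n Ms \<longleftrightarrow> n > 0 \<and>
     (\<forall>W. invariant_subspace n Ms W \<longrightarrow> W = {0\<^sub>v n} \<or> W = carrier_vec n)"

definition poly_mat :: "'a::comm_ring_1 poly \<Rightarrow> 'a mat \<Rightarrow> 'a mat" where
  "poly_mat p M = foldr (\<lambda>c N. c \<cdot>\<^sub>m 1\<^sub>m (dim_row M) + M * N) (coeffs p)
                        (0\<^sub>m (dim_row M) (dim_row M))"

definition is_minimal_polynomial :: "'a::field mat \<Rightarrow> 'a poly \<Rightarrow> bool" where
  "is_minimal_polynomial M p \<longleftrightarrow>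
     lead_coeff p = 1 \<and> poly_mat p M = 0\<^sub>m (dim_row M) (dim_row M) \<and>
     (\<forall>q. q \<noteq> 0 \<and> poly_mat q M = 0\<^sub>m (dim_row M) (dim_row M) \<longrightarrow> degree p \<le> degree q)"

definition diagonalizable :: "'a::field mat \<Rightarrow> bool" where
  "diagonalizable M \<longleftrightarrow> (\<exists>D. diagonal_mat D \<and> similar_mat M D)"

definition alg_closed_type :: "'a::field itself \<Rightarrow> bool" where
  "alg_closed_type _ \<longleftrightarrow> (\<forall>p::'a poly. degree p \<ge> 1 \<longrightarrow> (\<exists>x. poly p x = 0))"

end

theory Submission
  imports Defs
begin

(* The defining relations, the vanishing of alpha, beta, gamma and the identities
  p(A) = p(B) = p(C) = 0 for p = (x + 1/4)(x - 3/4)^2(x - 15/4)^2 are finite computations with the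
  given matrices.
  Minimality of p: A and C are lower Hessenberg and B is upper Hessenberg, all with nonzero
  off-diagonal, so the vectors M^k e_0 (k < 5) are triangular with respect to the standard basis and
  no nonzero polynomial of degree < 5 annihilates M. A diagonalizable matrix annihilated by p is also
  annihilated by (x + 1/4)(x - 3/4)(x - 15/4), which has smaller degree; hence none of A, B, C is
  diagonalizable. Irreducibility: the algebra generated by A and B contains the matrix units
  E_4j and E_j4, so a nonzero invariant subspace contains e_4 and then every e_j. *)

(* Every matrix expression built from mat_of_rows_list is normalised by the simplifier to a single
  mat_of_rows_list, whose entries are then computed as list elements. *)

definition rows_mult :: "nat \<Rightarrow> 'a::semiring_0 list list \<Rightarrow> 'a list list \<Rightarrow> 'a list list" where
  "rows_mult n xs ys =
    map (\<lambda>r. map (\<lambda>j. sum_list (map (\<lambda>k. r ! k * ys ! k ! j) [0..<n])) [0..<n]) xs"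

definition rows_map2 ::
    "('a \<Rightarrow> 'b \<Rightarrow> 'c) \<Rightarrow> nat \<Rightarrow> 'a list list \<Rightarrow> 'b list list \<Rightarrow> 'c list list" where
  "rows_map2 f n xs ys =
    map (\<lambda>i. map (\<lambda>j. f (xs ! i ! j) (ys ! i ! j)) [0..<n]) [0..<length ys]"

lemma dim_mat_of_rows_list [simp]:
  "dim_row (mat_of_rows_list n xs) = length xs" "dim_col (mat_of_rows_list n xs) = n"
  by (simp_all add: mat_of_rows_list_def)

lemma mat_of_rows_list_carrier [simp]: "length xs = m \<Longrightarrow> mat_of_rows_list n xs \<in> carrier_mat m n"
  by (simp add: mat_of_rows_list_def)

lemma mat_of_rows_list_mult:
  "length ys = n \<Longrightarrow>
    mat_of_rows_list n xs * mat_of_rows_list n ys = mat_of_rows_list n (rows_mult n xs ys)"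
  by (rule eq_matI)
    (auto simp: mat_of_rows_list_def rows_mult_def scalar_prod_def sum_set_upt_conv_sum_list_nat[symmetric])

lemma mat_of_rows_list_plus:
  "length xs = length ys \<Longrightarrow>
    mat_of_rows_list n xs + mat_of_rows_list n ys = mat_of_rows_list n (rows_map2 (+) n xs ys)"
  by (rule eq_matI) (auto simp: mat_of_rows_list_def rows_map2_def)

lemma mat_of_rows_list_minus:
  "length xs = length ys \<Longrightarrow>
    mat_of_rows_list n xs - mat_of_rows_list n ys = mat_of_rows_list n (rows_map2 (-) n xs ys)"
  by (rule eq_matI) (auto simp: mat_of_rows_list_def rows_map2_def)

lemma smult_mat_of_rows_list:
  "c \<cdot>\<^sub>m mat_of_rows_list n xs = mat_of_rows_list n (map (\<lambda>r. map (\<lambda>j. c * r ! j) [0..<n]) xs)"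
  by (rule eq_matI) (auto simp: mat_of_rows_list_def)

lemma index_mat_of_rows_list [simp]:
  "i < length xs \<Longrightarrow> j < n \<Longrightarrow> mat_of_rows_list n xs $$ (i, j) = xs ! i ! j"
  by (simp add: mat_of_rows_list_def)

lemma mat_eq_mat_of_rows_list:
  "mat m n f = mat_of_rows_list n (map (\<lambda>i. map (\<lambda>j. f (i, j)) [0..<n]) [0..<m])"
  by (rule eq_matI) (auto simp: mat_of_rows_list_def)

lemma upt_0_5: "[0..<5] = [0, 1, 2, 3, 4 :: nat]"
  by (simp add: upt_rec)

lemmas mat_of_rows_list_eval = mat_of_rows_list_mult mat_of_rows_list_plus mat_of_rows_list_minus
  smult_mat_of_rows_list mat_eq_mat_of_rows_list one_mat_def zero_mat_def
  rows_mult_def rows_map2_def upt_0_5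

lemma racah_matrices_carrier:
  "(matA :: 'a::field mat) \<in> carrier_mat 5 5" "(matB :: 'a mat) \<in> carrier_mat 5 5"
  "(matC :: 'a mat) \<in> carrier_mat 5 5" "(matD :: 'a mat) \<in> carrier_mat 5 5"
  by (simp_all add: matA_def matB_def matC_def matD_def)

lemma racah_commutators:
  "commut (matA :: 'a::field_char_0 mat) matB = 2 \<cdot>\<^sub>m matD"
  "commut (matB :: 'a mat) matC = 2 \<cdot>\<^sub>m matD"
  "commut (matC :: 'a mat) matA = 2 \<cdot>\<^sub>m matD"
  by (simp_all add: commut_def matA_def matB_def matC_def matD_def mat_of_rows_list_eval)

lemma racah_alpha_beta_gamma_zero:
  "racah_alpha (matA :: 'a::field_char_0 mat) matB matC matD = 0\<^sub>m 5 5"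
  "racah_beta (matA :: 'a mat) matB matC matD = 0\<^sub>m 5 5"
  "racah_gamma (matA :: 'a mat) matB matC matD = 0\<^sub>m 5 5"
  by (simp_all add: racah_alpha_def racah_beta_def racah_gamma_def commut_def
      matA_def matB_def matC_def matD_def mat_of_rows_list_eval)

lemma racah_rep_matrices: "racah_rep 5 (matA :: 'a::field_char_0 mat) matB matC matD"
  using racah_matrices_carrier racah_commutators
  unfolding racah_rep_def racah_alpha_beta_gamma_zero by auto

definition matrix_unit :: "nat \<Rightarrow> nat \<Rightarrow> nat \<Rightarrow> 'a::{zero,one} mat" where
  "matrix_unit n i j = mat n n (\<lambda>(a, b). if a = i \<and> b = j then 1 else 0)"

(* The factors of p(A) other than one factor A - 15/4 multiply to E_40. Multiplying by the shifts
  B - b_jj of the upper triangular B moves the nonzero entry along row 4 and then up column 4. *)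

lemma racah_matrix_unit_identities:
  fixes sA sB :: "'a::field_char_0 \<Rightarrow> 'a mat"
  defines "sA c \<equiv> matA + c \<cdot>\<^sub>m 1\<^sub>m 5" and "sB c \<equiv> matB + c \<cdot>\<^sub>m 1\<^sub>m 5"
  shows "matrix_unit 5 4 0 = sA (-3/4) * sA (-3/4) * sA (1/4) * sA (-15/4)"
    and "matrix_unit 5 4 1 = (-1/9) \<cdot>\<^sub>m (matrix_unit 5 4 0 * sB (-15/4))"
    and "matrix_unit 5 4 2 = (-2/3) \<cdot>\<^sub>m (matrix_unit 5 4 1 * sB (-3/4))"
    and "matrix_unit 5 4 3 = (-2/3) \<cdot>\<^sub>m (matrix_unit 5 4 2 * sB (1/4))"
    and "matrix_unit 5 4 4 = (-1/9) \<cdot>\<^sub>m (matrix_unit 5 4 3 * sB (-3/4))"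
    and "matrix_unit 5 3 4 = (-1/9) \<cdot>\<^sub>m (sB (-15/4) * matrix_unit 5 4 4)"
    and "matrix_unit 5 2 4 = (-2/3) \<cdot>\<^sub>m (sB (-3/4) * matrix_unit 5 3 4)"
    and "matrix_unit 5 1 4 = (-2/3) \<cdot>\<^sub>m (sB (1/4) * matrix_unit 5 2 4)"
    and "matrix_unit 5 0 4 = (-1/9) \<cdot>\<^sub>m (sB (-3/4) * matrix_unit 5 1 4)"
  unfolding sA_def sB_def
  by (simp_all add: matA_def matB_def matrix_unit_def mat_of_rows_list_eval)

(* B is upper Hessenberg; conjugating by the exchange matrix reverses the basis. *)

definition exchange_mat :: "nat \<Rightarrow> 'a::{zero,one} mat" where
  "exchange_mat n = mat n n (\<lambda>(i, j). if i + j = n - 1 then 1 else 0)"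

definition matB_reversed :: "'a::field mat" where
  "matB_reversed = mat_of_rows_list 5
    [[15/4, 0, 0, 0, 0], [-9, 3/4, 0, 0, 0], [0, -3/2, -1/4, 0, 0], [0, 0, -3/2, 3/4, 0],
     [0, 0, 0, -9, 15/4]]"

lemma exchange_mat_5_involution: "exchange_mat 5 * exchange_mat 5 = (1\<^sub>m 5 :: 'a::field mat)"
  by (simp add: exchange_mat_def mat_of_rows_list_eval)

lemma matB_eq_exchange_conj:
  "(matB :: 'a::field_char_0 mat) = exchange_mat 5 * matB_reversed * exchange_mat 5"
  by (simp add: exchange_mat_def matB_reversed_def matB_def mat_of_rows_list_eval)

lemma zero_smult_mat [simp]: "(0 :: 'a::mult_zero) \<cdot>\<^sub>m A = 0\<^sub>m (dim_row A) (dim_col A)"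
  by (rule eq_matI) auto

lemma one_smult_mat [simp]: "(1 :: 'a::monoid_mult) \<cdot>\<^sub>m A = A"
  by (rule eq_matI) auto

lemma poly_mat_0 [simp]: "poly_mat 0 M = 0\<^sub>m (dim_row M) (dim_row M)"
  by (simp add: poly_mat_def)

lemma poly_mat_pCons:
  assumes "M \<in> carrier_mat n n"
  shows "poly_mat (pCons a p) M = a \<cdot>\<^sub>m 1\<^sub>m n + M * poly_mat p M"
proof (cases "a = 0 \<and> p = 0")
  case True
  then show ?thesis using assms by (auto simp: poly_mat_def intro!: eq_matI)
next
  case False
  then have "coeffs (pCons a p) = a # coeffs p" by (auto simp: cCons_def)
  then show ?thesis using assms by (simp add: poly_mat_def)
qed

lemma dim_poly_mat [simp]:
  "dim_row (poly_mat p M) = dim_row M" "dim_col (poly_mat p M) = dim_row M"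
proof -
  have "dim_row (foldr (\<lambda>c N. c \<cdot>\<^sub>m 1\<^sub>m (dim_row M) + M * N) cs (0\<^sub>m (dim_row M) (dim_row M)))
          = dim_row M \<and>
        dim_col (foldr (\<lambda>c N. c \<cdot>\<^sub>m 1\<^sub>m (dim_row M) + M * N) cs (0\<^sub>m (dim_row M) (dim_row M)))
          = dim_row M" for cs
    by (induction cs) simp_all
  then show "dim_row (poly_mat p M) = dim_row M" "dim_col (poly_mat p M) = dim_row M"
    unfolding poly_mat_def by auto
qed

lemma poly_mat_carrier [simp]: "M \<in> carrier_mat n n \<Longrightarrow> poly_mat p M \<in> carrier_mat n n"
  by (metis carrier_matD carrier_matI dim_poly_mat)

lemma poly_mat_plus:
  fixes M :: "'a::comm_ring_1 mat"
  assumes M: "M \<in> carrier_mat n n"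
  shows "poly_mat (p + q) M = poly_mat p M + poly_mat q M"
proof (induction p q rule: poly_induct2)
  case 0
  then show ?case using M by simp
next
  case (pCons a p b q)
  have "poly_mat (pCons a p + pCons b q) M
      = (a + b) \<cdot>\<^sub>m 1\<^sub>m n + (M * poly_mat p M + M * poly_mat q M)"
    using M by (simp add: poly_mat_pCons pCons.IH mult_add_distrib_mat[of _ n n _ n])
  also have "\<dots> = poly_mat (pCons a p) M + poly_mat (pCons b q) M"
    using M by (intro eq_matI) (simp_all add: poly_mat_pCons algebra_simps)
  finally show ?case .
qed

lemma poly_mat_smult:
  fixes M :: "'a::comm_ring_1 mat"
  assumes M: "M \<in> carrier_mat n n"
  shows "poly_mat (smult c p) M = c \<cdot>\<^sub>m poly_mat p M"
proof (induction p rule: pCons_induct)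
  case 0
  then show ?case using M by simp
next
  case (pCons a p)
  have "poly_mat (smult c (pCons a p)) M = (c * a) \<cdot>\<^sub>m 1\<^sub>m n + c \<cdot>\<^sub>m (M * poly_mat p M)"
    using M by (simp add: poly_mat_pCons pCons.IH mult_smult_distrib[of _ n n _ n])
  also have "\<dots> = c \<cdot>\<^sub>m poly_mat (pCons a p) M"
    using M by (intro eq_matI) (simp_all add: poly_mat_pCons algebra_simps)
  finally show ?case .
qed

lemma poly_mat_mult:
  fixes M :: "'a::comm_ring_1 mat"
  assumes M: "M \<in> carrier_mat n n"
  shows "poly_mat (p * q) M = poly_mat p M * poly_mat q M"
proof (induction p rule: pCons_induct)
  case 0
  then show ?case using M by simp
next
  case (pCons a p)
  have "M * (poly_mat p M * poly_mat q M) \<in> carrier_mat n n"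
    using M by (intro mult_carrier_mat) auto
  then have "poly_mat (pCons a p * q) M = a \<cdot>\<^sub>m poly_mat q M + M * (poly_mat p M * poly_mat q M)"
    using M by (simp add: poly_mat_plus poly_mat_smult poly_mat_pCons pCons.IH)
  also have "\<dots> = poly_mat (pCons a p) M * poly_mat q M"
    using M by (simp add: poly_mat_pCons add_mult_distrib_mat[of _ n n _ _ n]
        mult_smult_assoc_mat[of _ n n _ n] assoc_mult_mat[OF M poly_mat_carrier[OF M] poly_mat_carrier[OF M]])
  finally show ?case .
qed

lemma poly_mat_linear:
  fixes M :: "'a::comm_ring_1 mat"
  assumes "M \<in> carrier_mat n n"
  shows "poly_mat [:c, 1:] M = c \<cdot>\<^sub>m 1\<^sub>m n + M"
  using assms by (simp add: poly_mat_pCons)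

lemma poly_mat_similar:
  assumes "similar_mat_wit M D P Q"
  shows "poly_mat p M = P * poly_mat p D * Q"
proof -
  define n where "n = dim_row M"
  from similar_mat_witD[OF n_def assms]
  have M: "M \<in> carrier_mat n n" and D: "D \<in> carrier_mat n n"
    and P: "P \<in> carrier_mat n n" and Q: "Q \<in> carrier_mat n n"
    and PQ: "P * Q = 1\<^sub>m n" and QP: "Q * P = 1\<^sub>m n" and MD: "M = P * D * Q"
    by auto
  have cancel: "Q * (P * X) = X" if "X \<in> carrier_mat n n" for X
    using that P Q by (simp add: QP assoc_mult_mat[of Q n n P n X n, symmetric])
  have mult_closed: "X * Y \<in> carrier_mat n n" if "X \<in> carrier_mat n n" "Y \<in> carrier_mat n n" for X Y
    using that by simp
  show ?thesis
  proof (induction p rule: pCons_induct)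
    case 0
    then show ?case using D P Q M by (simp add: PQ)
  next
    case (pCons a p)
    have "poly_mat (pCons a p) M = a \<cdot>\<^sub>m (P * Q) + (P * D * Q) * (P * poly_mat p D * Q)"
      using M by (simp add: poly_mat_pCons pCons.IH PQ flip: MD)
    also have "\<dots> = P * poly_mat (pCons a p) D * Q"
      using D P Q by (simp add: poly_mat_pCons cancel add_mult_distrib_mat[of _ n n _ _ n]
          mult_add_distrib_mat[of _ n n _ n] mult_smult_distrib[of _ n n _ n]
          mult_smult_assoc_mat[of _ n n _ n] assoc_mult_mat[of _ n n _ n _ n] mult_closed)
    finally show ?case .
  qed
qed

lemma diagonal_mat_eq_mat_diag:
  "D \<in> carrier_mat n n \<Longrightarrow> diagonal_mat D \<Longrightarrow> D = mat_diag n (\<lambda>i. D $$ (i, i))"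
  by (rule eq_matI) (auto simp: diagonal_mat_def mat_diag_def)

lemma poly_mat_mat_diag: "poly_mat p (mat_diag n f) = mat_diag n (\<lambda>i. poly p (f i))"
proof (induction p rule: pCons_induct)
  case 0
  then show ?case by (rule eq_matI) (auto simp: mat_diag_def)
next
  case (pCons a p)
  have "poly_mat (pCons a p) (mat_diag n f)
      = a \<cdot>\<^sub>m 1\<^sub>m n + mat_diag n (\<lambda>i. f i * poly p (f i))"
    by (simp add: poly_mat_pCons[OF mat_diag_dim] pCons.IH)
  then show ?case by (auto intro!: eq_matI simp: mat_diag_def)
qed

definition lower_Hessenberg :: "'a::zero mat \<Rightarrow> bool" where
  "lower_Hessenberg M \<longleftrightarrow> (\<forall>i j. i < dim_row M \<longrightarrow> Suc j < i \<longrightarrow> M $$ (i, j) = 0)"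

lemma index_poly_mat_pCons:
  assumes M: "M \<in> carrier_mat n n" and "i < n" "j < n"
  shows "poly_mat (pCons a p) M $$ (i, j)
    = (if i = j then a else 0) + (\<Sum>k<n. M $$ (i, k) * poly_mat p M $$ (k, j))"
  using assms by (simp add: poly_mat_pCons scalar_prod_def lessThan_atLeast0)

(* The first column of q(M) is q(M) e_0, and M^k e_0 vanishes below index k. *)

lemma poly_mat_Hessenberg_first_column:
  fixes M :: "'a::comm_ring_1 mat"
  assumes M: "M \<in> carrier_mat n n" and "lower_Hessenberg M" and "degree q < n"
  shows "(\<forall>i. degree q < i \<and> i < n \<longrightarrow> poly_mat q M $$ (i, 0) = 0) \<and>
    poly_mat q M $$ (degree q, 0) = lead_coeff q * (\<Prod>j<degree q. M $$ (Suc j, j))"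
  using assms(3)
proof (induction q rule: pCons_induct)
  case 0
  then show ?case using M by simp
next
  case (pCons a p)
  show ?case
  proof (cases "p = 0")
    case True
    then show ?thesis using M pCons.prems by (auto simp: index_poly_mat_pCons)
  next
    case False
    define d where "d = degree p"
    have deg: "degree (pCons a p) = Suc d" using False by (simp add: d_def)
    with pCons.prems pCons.IH have d: "Suc d < n"
      and below: "\<And>k. d < k \<Longrightarrow> k < n \<Longrightarrow> poly_mat p M $$ (k, 0) = 0"
      and diag: "poly_mat p M $$ (d, 0) = lead_coeff p * (\<Prod>j<d. M $$ (Suc j, j))"
      by (auto simp: d_def)
    have column: "poly_mat (pCons a p) M $$ (i, 0)
        = (if i = Suc d then M $$ (Suc d, d) * poly_mat p M $$ (d, 0) else 0)"
      if "Suc d \<le> i" "i < n" for i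
    proof -
      have "M $$ (i, k) * poly_mat p M $$ (k, 0)
          = (if k = d \<and> i = Suc d then M $$ (Suc d, d) * poly_mat p M $$ (d, 0) else 0)"
        if "k < n" for k
        using that \<open>Suc d \<le> i\<close> \<open>i < n\<close> \<open>lower_Hessenberg M\<close> M below[of k]
        unfolding lower_Hessenberg_def by (cases "d < k") auto
      then show ?thesis using that d by (simp add: index_poly_mat_pCons[OF M] sum.If_cases)
    qed
    have "poly_mat (pCons a p) M $$ (Suc d, 0)
        = lead_coeff (pCons a p) * (\<Prod>j<Suc d. M $$ (Suc j, j))"
      using column[of "Suc d"] d diag False by (simp add: algebra_simps)
    with column d show ?thesis unfolding deg by auto
  qed
qed

lemma Hessenberg_annihilator_degree:
  fixes M :: "'a::idom mat"
  assumes M: "M \<in> carrier_mat n n" and Hessenberg: "lower_Hessenberg M"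
    and subdiagonal: "\<And>j. Suc j < n \<Longrightarrow> M $$ (Suc j, j) \<noteq> 0"
    and "q \<noteq> 0" and "poly_mat q M = 0\<^sub>m n n"
  shows "n \<le> degree q"
proof (rule ccontr)
  assume "\<not> n \<le> degree q"
  then have "degree q < n" by simp
  with poly_mat_Hessenberg_first_column[OF M Hessenberg]
  have "poly_mat q M $$ (degree q, 0) = lead_coeff q * (\<Prod>j<degree q. M $$ (Suc j, j))" by blast
  moreover have "lead_coeff q * (\<Prod>j<degree q. M $$ (Suc j, j)) \<noteq> 0"
    using \<open>q \<noteq> 0\<close> \<open>degree q < n\<close> subdiagonal by auto
  ultimately show False using \<open>poly_mat q M = 0\<^sub>m n n\<close> \<open>degree q < n\<close> by simp
qed

lemma is_minimal_polynomial_Hessenberg: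
  fixes M :: "'a::field mat"
  assumes M: "M \<in> carrier_mat n n" and Hessenberg: "lower_Hessenberg M"
    and subdiagonal: "\<And>j. Suc j < n \<Longrightarrow> M $$ (Suc j, j) \<noteq> 0"
    and "lead_coeff p = 1" "degree p = n" "poly_mat p M = 0\<^sub>m n n"
  shows "is_minimal_polynomial M p"
  using assms Hessenberg_annihilator_degree[OF M Hessenberg subdiagonal]
  unfolding is_minimal_polynomial_def by auto

lemma is_minimal_polynomial_similar:
  assumes "similar_mat_wit M D P Q" and "is_minimal_polynomial D p"
  shows "is_minimal_polynomial M p"
proof -
  define n where "n = dim_row M"
  from similar_mat_witD[OF n_def assms(1)] have carrier: "{M, D, P, Q} \<subseteq> carrier_mat n n"
    by auto
  have "poly_mat q M = 0\<^sub>m n n \<longleftrightarrow> poly_mat q D = 0\<^sub>m n n" for q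
    using carrier poly_mat_similar[OF assms(1), of q]
      poly_mat_similar[OF similar_mat_wit_sym[OF assms(1)], of q] by auto
  moreover have "dim_row D = n" using carrier by auto
  ultimately show ?thesis using assms(2) unfolding is_minimal_polynomial_def n_def by auto
qed

lemma diagonalizable_annihilated_by_roots:
  assumes "diagonalizable M" and "poly_mat p M = 0\<^sub>m (dim_row M) (dim_row M)"
    and roots: "\<And>x. poly p x = 0 \<Longrightarrow> poly r x = 0"
  shows "poly_mat r M = 0\<^sub>m (dim_row M) (dim_row M)"
proof -
  define n where "n = dim_row M"
  obtain D P Q where diag: "diagonal_mat D" and wit: "similar_mat_wit M D P Q"
    using assms(1) unfolding diagonalizable_def similar_mat_def by blast
  from similar_mat_witD[OF n_def wit] have D: "D \<in> carrier_mat n n"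
    and P: "P \<in> carrier_mat n n" and Q: "Q \<in> carrier_mat n n" by auto
  define f where "f i = D $$ (i, i)" for i
  have D_diag: "D = mat_diag n f" unfolding f_def by (rule diagonal_mat_eq_mat_diag[OF D diag])
  have "mat_diag n (\<lambda>i. poly p (f i)) = Q * poly_mat p M * P"
    using poly_mat_similar[OF similar_mat_wit_sym[OF wit]] D_diag by (simp add: poly_mat_mat_diag)
  also have "\<dots> = 0\<^sub>m n n" using assms(2) P Q by (simp add: n_def)
  finally have pD: "mat_diag n (\<lambda>i. poly p (f i)) = 0\<^sub>m n n" .
  have "poly p (f i) = 0" if "i < n" for i
    using that arg_cong[OF pD, of "\<lambda>A. A $$ (i, i)"] by (simp add: mat_diag_def)
  then have "poly_mat r D = 0\<^sub>m n n"
    unfolding D_diag poly_mat_mat_diag by (auto intro!: eq_matI simp: mat_diag_def roots)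
  then show ?thesis using poly_mat_similar[OF wit] P Q by (simp add: n_def)
qed

lemma degree_minimal_polynomial_if_diagonalizable:
  assumes "diagonalizable M" and "is_minimal_polynomial M p"
    and "r \<noteq> 0" and "\<And>x. poly p x = 0 \<Longrightarrow> poly r x = 0"
  shows "degree p \<le> degree r"
  using assms diagonalizable_annihilated_by_roots[of M p r]
  unfolding is_minimal_polynomial_def by blast

inductive_set mat_algebra :: "nat \<Rightarrow> 'a::semiring_1 mat set \<Rightarrow> 'a mat set" for n Ms where
  generator: "X \<in> Ms \<Longrightarrow> X \<in> mat_algebra n Ms"
| one: "1\<^sub>m n \<in> mat_algebra n Ms"
| plus: "X \<in> mat_algebra n Ms \<Longrightarrow> Y \<in> mat_algebra n Ms \<Longrightarrow> X + Y \<in> mat_algebra n Ms"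
| mult: "X \<in> mat_algebra n Ms \<Longrightarrow> Y \<in> mat_algebra n Ms \<Longrightarrow> X * Y \<in> mat_algebra n Ms"
| smult: "X \<in> mat_algebra n Ms \<Longrightarrow> c \<cdot>\<^sub>m X \<in> mat_algebra n Ms"

lemma mat_algebra_carrier:
  "X \<in> mat_algebra n Ms \<Longrightarrow> Ms \<subseteq> carrier_mat n n \<Longrightarrow> X \<in> carrier_mat n n"
  by (induction rule: mat_algebra.induct) auto

lemma smult_mat_mult_vec:
  "A \<in> carrier_mat n m \<Longrightarrow> v \<in> carrier_vec m \<Longrightarrow> (c \<cdot>\<^sub>m A) *\<^sub>v v = c \<cdot>\<^sub>v (A *\<^sub>v v)"
  by (rule eq_vecI) (auto simp: scalar_prod_def sum_distrib_left mult.assoc)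

lemma invariant_subspace_mat_algebra:
  assumes W: "invariant_subspace n Ms W" and Ms: "Ms \<subseteq> carrier_mat n n"
    and "X \<in> mat_algebra n Ms" and "v \<in> W"
  shows "X *\<^sub>v v \<in> W"
  using assms(3,4)
proof (induction X arbitrary: v rule: mat_algebra.induct)
  case (generator X)
  then show ?case using W unfolding invariant_subspace_def by blast
next
  case one
  then show ?case using W unfolding invariant_subspace_def by auto
next
  case (plus X Y)
  have "X \<in> carrier_mat n n" "Y \<in> carrier_mat n n" "v \<in> carrier_vec n"
    using plus.hyps Ms mat_algebra_carrier W plus.prems unfolding invariant_subspace_def by auto
  then have "(X + Y) *\<^sub>v v = X *\<^sub>v v + Y *\<^sub>v v" by (simp add: add_mult_distrib_mat_vec)
  then show ?case using plus W unfolding invariant_subspace_def by simp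
next
  case (mult X Y)
  have "X \<in> carrier_mat n n" "Y \<in> carrier_mat n n" "v \<in> carrier_vec n"
    using mult.hyps Ms mat_algebra_carrier W mult.prems unfolding invariant_subspace_def by auto
  then have "(X * Y) *\<^sub>v v = X *\<^sub>v (Y *\<^sub>v v)" by simp
  then show ?case using mult by simp
next
  case (smult X c)
  have "X \<in> carrier_mat n n" "v \<in> carrier_vec n"
    using smult.hyps Ms mat_algebra_carrier W smult.prems unfolding invariant_subspace_def by auto
  then have "(c \<cdot>\<^sub>m X) *\<^sub>v v = c \<cdot>\<^sub>v (X *\<^sub>v v)" by (rule smult_mat_mult_vec)
  then show ?case using smult W unfolding invariant_subspace_def by simp
qed

lemma matrix_unit_mult_vec:
  fixes v :: "'a::semiring_1 vec"
  assumes "v \<in> carrier_vec n" and "i < n" and "j < n"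
  shows "matrix_unit n i j *\<^sub>v v = v $ j \<cdot>\<^sub>v unit_vec n i"
proof (rule eq_vecI)
  fix a assume "a < dim_vec (v $ j \<cdot>\<^sub>v unit_vec n i)"
  then have a: "a < n" by simp
  have "(\<Sum>b = 0..<n. (if a = i \<and> b = j then 1 else 0) * v $ b)
      = (\<Sum>b = 0..<n. if b = j then (if a = i then v $ j else 0) else 0)"
    by (rule sum.cong) auto
  then show "(matrix_unit n i j *\<^sub>v v) $ a = (v $ j \<cdot>\<^sub>v unit_vec n i) $ a"
    using assms a by (simp add: matrix_unit_def scalar_prod_def)
qed (use assms in \<open>simp add: matrix_unit_def\<close>)

lemma invariant_subspace_eq_carrier:
  assumes W: "invariant_subspace n Ms W" and units: "\<And>i. i < n \<Longrightarrow> unit_vec n i \<in> W"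
  shows "W = carrier_vec n"
proof
  show "W \<subseteq> carrier_vec n" using W unfolding invariant_subspace_def by blast
  show "carrier_vec n \<subseteq> W"
  proof
    fix u :: "'a vec" assume u: "u \<in> carrier_vec n"
    have "vec n (\<lambda>i. if i < m then u $ i else 0) \<in> W" if "m \<le> n" for m
      using that
    proof (induction m)
      case 0
      then show ?case using W unfolding invariant_subspace_def zero_vec_def by simp
    next
      case (Suc m)
      have "vec n (\<lambda>i. if i < Suc m then u $ i else 0)
          = vec n (\<lambda>i. if i < m then u $ i else 0) + u $ m \<cdot>\<^sub>v unit_vec n m"
        by (rule eq_vecI) (auto simp: unit_vec_def less_Suc_eq)
      then show ?case using Suc units[of m] W unfolding invariant_subspace_def by simp
    qed
    moreover have "vec n (\<lambda>i. if i < n then u $ i else 0) = u" using u by (intro eq_vecI) auto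
    ultimately show "u \<in> W" by force
  qed
qed

lemma irreducible_rep_if_matrix_units:
  fixes Ms :: "'a::field mat set"
  assumes Ms: "Ms \<subseteq> carrier_mat n n" and k: "k < n"
    and row: "\<And>j. j < n \<Longrightarrow> matrix_unit n k j \<in> mat_algebra n Ms"
    and column: "\<And>j. j < n \<Longrightarrow> matrix_unit n j k \<in> mat_algebra n Ms"
  shows "irreducible_rep n Ms"
  unfolding irreducible_rep_def
proof (intro conjI allI impI)
  show "0 < n" using k by simp
  fix W assume W: "invariant_subspace n Ms W"
  show "W = {0\<^sub>v n} \<or> W = carrier_vec n"
  proof (cases "W = {0\<^sub>v n}")
    case False
    then obtain v where v: "v \<in> W" "v \<noteq> 0\<^sub>v n"
      using W unfolding invariant_subspace_def by blast
    then have v_carrier: "v \<in> carrier_vec n" using W unfolding invariant_subspace_def by blast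
    then obtain j where j: "j < n" "v $ j \<noteq> 0"
      using v(2) by (metis eq_vecI carrier_vecD index_zero_vec)
    have "v $ j \<cdot>\<^sub>v unit_vec n k \<in> W"
      using invariant_subspace_mat_algebra[OF W Ms row[OF j(1)] v(1)]
      by (simp add: matrix_unit_mult_vec[OF v_carrier k j(1)])
    then have "(1 / v $ j) \<cdot>\<^sub>v (v $ j \<cdot>\<^sub>v unit_vec n k) \<in> W"
      using W unfolding invariant_subspace_def by blast
    then have unit_k: "unit_vec n k \<in> W" using j(2) by (simp add: smult_smult_assoc)
    have "unit_vec n i \<in> W" if "i < n" for i
      using invariant_subspace_mat_algebra[OF W Ms column[OF that] unit_k] k
      by (simp add: matrix_unit_mult_vec[OF _ that k])
    then show ?thesis using invariant_subspace_eq_carrier[OF W] by blast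
  qed simp
qed

abbreviation racah_min_poly :: "'a::field_char_0 poly" where
  "racah_min_poly \<equiv> [:1/4, 1:] * [:-3/4, 1:]^2 * [:-15/4, 1:]^2"

lemma racah_min_poly_annihilates:
  "poly_mat racah_min_poly (matA :: 'a::field_char_0 mat) = 0\<^sub>m 5 5"
  "poly_mat racah_min_poly (matC :: 'a mat) = 0\<^sub>m 5 5"
  unfolding power2_eq_square poly_mat_mult[OF racah_matrices_carrier(1)]
    poly_mat_mult[OF racah_matrices_carrier(3)] poly_mat_linear[OF racah_matrices_carrier(1)]
    poly_mat_linear[OF racah_matrices_carrier(3)]
  by (simp_all add: matA_def matC_def mat_of_rows_list_eval)

lemma racah_min_poly_degree: "degree racah_min_poly = 5" "lead_coeff racah_min_poly = 1"
  by (simp_all add: power2_eq_square)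

lemma racah_min_poly_not_diagonalizable:
  assumes "is_minimal_polynomial M racah_min_poly"
  shows "\<not> diagonalizable M"
proof
  let ?r = "[:1/4, 1:] * [:-3/4, 1:] * [:-15/4, 1:] :: 'a poly"
  assume "diagonalizable M"
  have roots: "poly ?r x = 0" if "poly (racah_min_poly :: 'a poly) x = 0" for x
    using that by (simp only: poly_mult poly_power mult_eq_0_iff power_eq_0_iff) auto
  have "?r \<noteq> 0" by simp
  have "degree (racah_min_poly :: 'a poly) \<le> degree ?r"
    by (rule degree_minimal_polynomial_if_diagonalizable[OF \<open>diagonalizable M\<close> assms \<open>?r \<noteq> 0\<close> roots])
  then show False by (simp add: power2_eq_square)
qed

lemma minimal_polynomial_matA: "is_minimal_polynomial (matA :: 'a::field_char_0 mat) racah_min_poly"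
proof (rule is_minimal_polynomial_Hessenberg[OF racah_matrices_carrier(1) _ _
      racah_min_poly_degree(2,1) racah_min_poly_annihilates(1)])
  show "lower_Hessenberg (matA :: 'a mat)"
    unfolding lower_Hessenberg_def matA_def
    by (auto simp: mat_of_rows_list_eval eval_nat_numeral less_Suc_eq)
  show "matA $$ (Suc j, j) \<noteq> (0 :: 'a)" if "Suc j < 5" for j
    using that unfolding matA_def by (auto simp: mat_of_rows_list_eval eval_nat_numeral less_Suc_eq)
qed

lemma minimal_polynomial_matC: "is_minimal_polynomial (matC :: 'a::field_char_0 mat) racah_min_poly"
proof (rule is_minimal_polynomial_Hessenberg[OF racah_matrices_carrier(3) _ _
      racah_min_poly_degree(2,1) racah_min_poly_annihilates(2)])
  show "lower_Hessenberg (matC :: 'a mat)"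
    unfolding lower_Hessenberg_def matC_def
    by (auto simp: mat_of_rows_list_eval eval_nat_numeral less_Suc_eq)
  show "matC $$ (Suc j, j) \<noteq> (0 :: 'a)" if "Suc j < 5" for j
    using that unfolding matC_def by (auto simp: mat_of_rows_list_eval eval_nat_numeral less_Suc_eq)
qed

lemma racah_min_poly_annihilates_matB_reversed:
  "poly_mat racah_min_poly (matB_reversed :: 'a::field_char_0 mat) = 0\<^sub>m 5 5"
proof -
  have B': "(matB_reversed :: 'a mat) \<in> carrier_mat 5 5" by (simp add: matB_reversed_def)
  show ?thesis
    unfolding power2_eq_square poly_mat_mult[OF B'] poly_mat_linear[OF B']
    by (simp add: matB_reversed_def mat_of_rows_list_eval)
qed

lemma minimal_polynomial_matB: "is_minimal_polynomial (matB :: 'a::field_char_0 mat) racah_min_poly"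
proof -
  let ?J = "exchange_mat 5 :: 'a mat"
  have J: "?J \<in> carrier_mat 5 5" and B': "(matB_reversed :: 'a mat) \<in> carrier_mat 5 5"
    by (simp_all add: exchange_mat_def matB_reversed_def)
  have wit: "similar_mat_wit matB matB_reversed ?J ?J"
    by (rule similar_mat_witI[OF exchange_mat_5_involution exchange_mat_5_involution
          matB_eq_exchange_conj racah_matrices_carrier(2) B' J J])
  have "is_minimal_polynomial (matB_reversed :: 'a mat) racah_min_poly"
  proof (rule is_minimal_polynomial_Hessenberg[OF B' _ _ racah_min_poly_degree(2,1)
        racah_min_poly_annihilates_matB_reversed])
    show "lower_Hessenberg (matB_reversed :: 'a mat)"
      unfolding lower_Hessenberg_def by (auto simp: matB_reversed_def eval_nat_numeral less_Suc_eq)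
    show "matB_reversed $$ (Suc j, j) \<noteq> (0 :: 'a)" if "Suc j < 5" for j
      using that by (auto simp: matB_reversed_def eval_nat_numeral less_Suc_eq)
  qed
  then show ?thesis by (rule is_minimal_polynomial_similar[OF wit])
qed

lemma racah_matrix_units:
  assumes "j < 5"
  shows "matrix_unit 5 4 j \<in> mat_algebra 5 {matA :: 'a::field_char_0 mat, matB, matC, matD}"
    and "matrix_unit 5 j 4 \<in> mat_algebra 5 {matA :: 'a mat, matB, matC, matD}"
proof -
  let ?R = "mat_algebra 5 {matA :: 'a mat, matB, matC, matD}"
  have shifts: "matA + c \<cdot>\<^sub>m 1\<^sub>m 5 \<in> ?R" "matB + c \<cdot>\<^sub>m 1\<^sub>m 5 \<in> ?R" for c
    by (auto intro!: mat_algebra.plus mat_algebra.smult mat_algebra.one intro: mat_algebra.generator)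
  note units = racah_matrix_unit_identities[where 'a = 'a]
  note closure = mat_algebra.smult mat_algebra.mult shifts
  have E40: "matrix_unit 5 4 0 \<in> ?R" unfolding units(1) by (intro closure)
  then have E41: "matrix_unit 5 4 1 \<in> ?R" unfolding units(2) by (intro closure)
  then have E42: "matrix_unit 5 4 2 \<in> ?R" unfolding units(3) by (intro closure)
  then have E43: "matrix_unit 5 4 3 \<in> ?R" unfolding units(4) by (intro closure)
  then have E44: "matrix_unit 5 4 4 \<in> ?R" unfolding units(5) by (intro closure)
  then have E34: "matrix_unit 5 3 4 \<in> ?R" unfolding units(6) by (intro closure)
  then have E24: "matrix_unit 5 2 4 \<in> ?R" unfolding units(7) by (intro closure)
  then have E14: "matrix_unit 5 1 4 \<in> ?R" unfolding units(8) by (intro closure)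
  then have E04: "matrix_unit 5 0 4 \<in> ?R" unfolding units(9) by (intro closure)
  have "j \<in> {0, 1, 2, 3, 4}" using assms by auto
  then show "matrix_unit 5 4 j \<in> ?R" "matrix_unit 5 j 4 \<in> ?R"
    using E40 E41 E42 E43 E44 E34 E24 E14 E04 by auto
qed

lemma irreducible_racah_matrices:
  "irreducible_rep 5 {matA :: 'a::field_char_0 mat, matB, matC, matD}"
  by (rule irreducible_rep_if_matrix_units[of _ _ 4])
    (use racah_matrices_carrier racah_matrix_units in auto)

theorem mainTheorem19:
  assumes "alg_closed_type TYPE('a::field_char_0)"
  shows "racah_rep 5 (matA::'a mat) matB matC matD
    \<and> racah_alpha (matA::'a mat) matB matC matD = 0\<^sub>m 5 5
    \<and> racah_beta (matA::'a mat) matB matC matD = 0\<^sub>m 5 5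
    \<and> racah_gamma (matA::'a mat) matB matC matD = 0\<^sub>m 5 5
    \<and> irreducible_rep 5 {matA::'a mat, matB, matC, matD}
    \<and> (\<forall>M \<in> {matA::'a mat, matB, matC}.
         is_minimal_polynomial M ([:1/4, 1:] * [:-3/4, 1:]^2 * [:-15/4, 1:]^2)
         \<and> \<not> diagonalizable M)"
proof -
  have "is_minimal_polynomial M racah_min_poly \<and> \<not> diagonalizable M" if "M \<in> {matA, matB, matC}"
    for M :: "'a mat"
    using that minimal_polynomial_matA minimal_polynomial_matB minimal_polynomial_matC
      racah_min_poly_not_diagonalizable by auto
  then show ?thesis
    using racah_rep_matrices racah_alpha_beta_gamma_zero irreducible_racah_matrices by blast
qed

end
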